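(* Let $\mathcal O\subset\mathbb R^2$ be a connected open set and let $\mathcal M=(\mathcal O,\Gamma)$ be an affine surface. Suppose there exist real linear functions $L_1,L_2,L_3$ such that $\{e^{L_1}\cos(L_2),e^{L_1}\sin(L_2),e^{L_3}\}$ is a basis of $\mathcal Q(\mathcal M)$. Then $\Gamma$ has constant Christoffel symbols (i.e. is Type $\mathcal A$), and $\Gamma$ is linearly equivalent to one of: $\Gamma_c^2(b_1,b_2)$ for some $b_1\neq1$ with $(b_1,b_2)\neq(0,0)$; $\Gamma_5^1(c)$ for some $c\in\mathbb R$; or $\Gamma_5^0$.
   Context: An affine manifold $(M,\nabla)$ is a smooth manifold $M$ of dimension $m\ge 2$ with a torsion-free connection $\nabla$ on $TM$; in local coordinates $\nabla_{\partial_{x^i}}\partial_{x^j}=\Gamma_{ij}^k\partial_{x^k}$ (summation over repeated indices). The curvature is $R(X,Y)Z=\nabla_X\nabla_YZ-\nabla_Y\nabla_XZ-\nabla_{[X,Y]}Z$, the Ricci tensor is $\rho(Y,Z)=\mathrm{Tr}(X\mapsto R(X,Y)Z)$, and $\rho_s(X,Y)=\frac12(\rho(X,Y)+\rho(Y,X))$. The Hessian is $\mathcal H_\nabla f=(\partial_{x^i}\partial_{x^j}f-\Gamma_{ij}^k\partial_{x^k}f)\,dx^i\otimes dx^j$. The quasi-Einstein solution space is $\mathcal Q(M,\nabla)=\{f\in C^\infty(M):\mathcal H_\nabla f+\frac{1}{m-1}f\rho_s=0\}$. For real constants, $\Gamma(a,b,c,d,e,f)$ denotes the connection on (an open subset of)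 $\mathbb R^2$ whose Christoffel symbols in the standard coordinates $(x^1,x^2)$ are the constants $\Gamma_{11}^1=a$, $\Gamma_{11}^2=b$, $\Gamma_{12}^1=\Gamma_{21}^1=c$, $\Gamma_{12}^2=\Gamma_{21}^2=d$, $\Gamma_{22}^1=e$, $\Gamma_{22}^2=f$. Two connections with constant Christoffel symbols are linearly equivalent if there is $T\in GL(2,\mathbb R)$ with $T^*\nabla_2=\nabla_1$. A real linear function is $L(x^1,x^2)=\alpha_1x^1+\alpha_2x^2$, $\alpha_i\in\mathbb R$. The specific connections: for $b_1\ne1$, $\Gamma_c^2(b_1,b_2):=\Gamma(1+b_1,0,b_2,1,\frac{1+b_2^2}{b_1-1},0)$; $\Gamma_5^1(c):=\Gamma(1,0,0,0,1+c^2,2c)$; $\Gamma_5^0:=\Gamma(1,0,0,1,-1,0)$. *)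

theory Defs
  imports "HOL-Analysis.Analysis"
begin

definition coord_idx :: "nat set" where "coord_idx = {1, 2}"

definition partial :: "nat \<Rightarrow> (real \<times> real \<Rightarrow> real) \<Rightarrow> real \<times> real \<Rightarrow> real" where
  "partial i f p =
     (if i = 1 then deriv (\<lambda>t. f (t, snd p)) (fst p) else deriv (\<lambda>t. f (fst p, t)) (snd p))"

definition smooth2_on :: "(real \<times> real) set \<Rightarrow> (real \<times> real \<Rightarrow> real) \<Rightarrow> bool" where
  "smooth2_on U f \<longleftrightarrow> (\<forall>ds. set ds \<subseteq> coord_idx \<longrightarrow> foldr partial ds f differentiable_on U)"

text \<open>A connection is given by Christoffel symbols G i j k = Gamma_ij^k (functions on R^2).
  Affine surface: smooth symbols, torsion free (symmetric in i j).\<close>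
definition affine_surface ::
  "(real \<times> real) set \<Rightarrow> (nat \<Rightarrow> nat \<Rightarrow> nat \<Rightarrow> real \<times> real \<Rightarrow> real) \<Rightarrow> bool" where
  "affine_surface U G \<longleftrightarrow> open U \<and>
     (\<forall>i\<in>coord_idx. \<forall>j\<in>coord_idx. \<forall>k\<in>coord_idx.
        smooth2_on U (G i j k) \<and> (\<forall>p\<in>U. G i j k p = G j i k p))"

text \<open>R(d_i,d_j) d_k = curv G i j k m d_m\<close>
definition curv :: "(nat \<Rightarrow> nat \<Rightarrow> nat \<Rightarrow> real \<times> real \<Rightarrow> real) \<Rightarrow> nat \<Rightarrow> nat \<Rightarrow> nat \<Rightarrow> nat
    \<Rightarrow> real \<times> real \<Rightarrow> real" where
  "curv G i j k m p = partial i (G j k m) p - partial j (G i k m) p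
     + (\<Sum>l\<in>coord_idx. G j k l p * G i l m p - G i k l p * G j l m p)"

definition ricci :: "(nat \<Rightarrow> nat \<Rightarrow> nat \<Rightarrow> real \<times> real \<Rightarrow> real) \<Rightarrow> nat \<Rightarrow> nat \<Rightarrow> real \<times> real \<Rightarrow> real" where
  "ricci G j k p = (\<Sum>i\<in>coord_idx. curv G i j k i p)"

definition ricci_s :: "(nat \<Rightarrow> nat \<Rightarrow> nat \<Rightarrow> real \<times> real \<Rightarrow> real) \<Rightarrow> nat \<Rightarrow> nat \<Rightarrow> real \<times> real \<Rightarrow> real" where
  "ricci_s G j k p = (ricci G j k p + ricci G k j p) / 2"

definition hess :: "(nat \<Rightarrow> nat \<Rightarrow> nat \<Rightarrow> real \<times> real \<Rightarrow> real) \<Rightarrow> (real \<times> real \<Rightarrow> real)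
    \<Rightarrow> nat \<Rightarrow> nat \<Rightarrow> real \<times> real \<Rightarrow> real" where
  "hess G f i j p = partial i (partial j f) p - (\<Sum>k\<in>coord_idx. G i j k p * partial k f p)"

text \<open>Quasi-Einstein solution space, m = 2 so 1/(m-1) = 1.\<close>
definition QE :: "(real \<times> real) set \<Rightarrow> (nat \<Rightarrow> nat \<Rightarrow> nat \<Rightarrow> real \<times> real \<Rightarrow> real)
    \<Rightarrow> (real \<times> real \<Rightarrow> real) set" where
  "QE U G = {f. smooth2_on U f \<and>
     (\<forall>p\<in>U. \<forall>i\<in>coord_idx. \<forall>j\<in>coord_idx.
        hess G f i j p + (1 / (2 - 1)) * f p * ricci_s G i j p = 0)}"

definition is_basis3_on :: "(real \<times> real) set \<Rightarrow> (real \<times> real \<Rightarrow> real) set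
    \<Rightarrow> (real \<times> real \<Rightarrow> real) \<Rightarrow> (real \<times> real \<Rightarrow> real) \<Rightarrow> (real \<times> real \<Rightarrow> real) \<Rightarrow> bool" where
  "is_basis3_on U Q f1 f2 f3 \<longleftrightarrow>
     f1 \<in> Q \<and> f2 \<in> Q \<and> f3 \<in> Q \<and>
     (\<forall>a b c. (\<forall>p\<in>U. a * f1 p + b * f2 p + c * f3 p = 0) \<longrightarrow> a = 0 \<and> b = 0 \<and> c = 0) \<and>
     (\<forall>g\<in>Q. \<exists>a b c. \<forall>p\<in>U. g p = a * f1 p + b * f2 p + c * f3 p)"

definition real_linear_fun :: "(real \<times> real \<Rightarrow> real) \<Rightarrow> bool" where
  "real_linear_fun L \<longleftrightarrow> (\<exists>\<alpha>1 \<alpha>2. \<forall>x1 x2. L (x1, x2) = \<alpha>1 * x1 + \<alpha>2 * x2)"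

definition Gam :: "real \<Rightarrow> real \<Rightarrow> real \<Rightarrow> real \<Rightarrow> real \<Rightarrow> real \<Rightarrow> nat \<Rightarrow> nat \<Rightarrow> nat \<Rightarrow> real" where
  "Gam a b c d e f i j k =
     (if i = 1 \<and> j = 1 then (if k = 1 then a else b)
      else if i = 2 \<and> j = 2 then (if k = 1 then e else f)
      else (if k = 1 then c else d))"

definition Gamma_c2 :: "real \<Rightarrow> real \<Rightarrow> nat \<Rightarrow> nat \<Rightarrow> nat \<Rightarrow> real" where
  "Gamma_c2 b1 b2 = Gam (1 + b1) 0 b2 1 ((1 + b2\<^sup>2) / (b1 - 1)) 0"

definition Gamma_5_1 :: "real \<Rightarrow> nat \<Rightarrow> nat \<Rightarrow> nat \<Rightarrow> real" where
  "Gamma_5_1 c = Gam 1 0 0 0 (1 + c\<^sup>2) (2 * c)"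

definition Gamma_5_0 :: "nat \<Rightarrow> nat \<Rightarrow> nat \<Rightarrow> real" where
  "Gamma_5_0 = Gam 1 0 0 1 (-1) 0"

text \<open>Linear equivalence of constant connections: T in GL(2,R) (x = T y) with
  T^* nabla_2 = nabla_1, i.e. Gamma1_ab^c = (T^-1)^c_k Gamma2_ij^k T^i_a T^j_b,
  written multiplied through by T.\<close>
definition lin_equiv :: "(nat \<Rightarrow> nat \<Rightarrow> nat \<Rightarrow> real) \<Rightarrow> (nat \<Rightarrow> nat \<Rightarrow> nat \<Rightarrow> real) \<Rightarrow> bool" where
  "lin_equiv C1 C2 \<longleftrightarrow> (\<exists>T :: nat \<Rightarrow> nat \<Rightarrow> real.
     T 1 1 * T 2 2 - T 1 2 * T 2 1 \<noteq> 0 \<and>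
     (\<forall>a\<in>coord_idx. \<forall>b\<in>coord_idx. \<forall>k\<in>coord_idx.
        (\<Sum>c\<in>coord_idx. T k c * C1 a b c) =
        (\<Sum>i\<in>coord_idx. \<Sum>j\<in>coord_idx. T i a * T j b * C2 i j k)))"

end

theory Submission
  imports Defs
begin

text \<open>Write \<open>L\<^sub>1 = \<alpha>\<cdot>x\<close>, \<open>L\<^sub>2 = \<beta>\<cdot>x\<close>, \<open>L\<^sub>3 = \<mu>\<cdot>x\<close>. At each point, the quasi-Einstein
  equations for the three exponentials split into their cosine and sine parts; eliminating the
  symmetric Ricci tensor leaves, for every \<open>i, j\<close>, two linear equations for the vector
  \<open>(\<Gamma>\<^sub>i\<^sub>j\<^sup>1, \<Gamma>\<^sub>i\<^sub>j\<^sup>2)\<close> with coefficient vectors \<open>\<beta>\<close> and \<open>\<mu> - \<alpha>\<close> and right-hand sides depending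
  only on \<open>\<alpha>, \<beta>, \<mu>\<close>. Linear independence forces \<open>\<beta> \<noteq> 0\<close>, and the diagonal equations then
  force \<open>det(\<beta>, \<mu> - \<alpha>) \<noteq> 0\<close>, so \<open>\<Gamma>\<close> is uniquely determined by \<open>\<alpha>, \<beta>, \<mu>\<close>, hence constant.
  In the coordinates \<open>(\<alpha>\<cdot>x, \<beta>\<cdot>x)\<close> the same equations are solved by \<open>\<Gamma>\<^sub>c\<^sup>2(s, t)\<close>, where
  \<open>\<mu> = s\<alpha> + t\<beta>\<close>; if \<open>\<alpha> = c\<beta>\<close> the coordinates \<open>(\<mu>\<cdot>x, \<beta>\<cdot>x)\<close> give \<open>\<Gamma>\<^sub>5\<^sup>1(c)\<close>. By uniqueness
  \<open>\<Gamma>\<close> is linearly equivalent to that model, and \<open>\<Gamma>\<^sub>c\<^sup>2(0, 0) = \<Gamma>\<^sub>5\<^sup>0\<close>.\<close>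

definition coord :: "real \<times> real \<Rightarrow> nat \<Rightarrow> real" where
  "coord v i = (if i = 1 then fst v else snd v)"

lemma coord_1 [simp]: "coord v (Suc 0) = fst v" "coord v 1 = fst v"
  and coord_2 [simp]: "coord v 2 = snd v"
  by (simp_all add: coord_def)

lemma coord_zero [simp]: "coord 0 i = 0"
  by (simp add: coord_def)

lemma coord_diff [simp]: "coord (u - v) i = coord u i - coord v i"
  by (simp add: coord_def)

lemma sum_coord_idx: "(\<Sum>k\<in>coord_idx. f k) = f 1 + f 2"
  by (simp add: coord_idx_def)

lemma inner_real_pair: "v \<bullet> (x, y) = fst v * x + snd v * y" for v :: "real \<times> real"
  by (cases v) simp

lemma real_linear_fun_inner:
  assumes "real_linear_fun L"
  obtains v where "L = (\<lambda>p. v \<bullet> p)"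
proof -
  obtain a b where "\<forall>x y. L (x, y) = a * x + b * y"
    using assms unfolding real_linear_fun_def by blast
  then have "L = (\<lambda>p. (a, b) \<bullet> p)"
    by (auto simp: inner_real_pair)
  then show ?thesis ..
qed

definition exp_trig :: "real \<times> real \<Rightarrow> real \<times> real \<Rightarrow> real \<Rightarrow> real \<Rightarrow> real \<times> real \<Rightarrow> real" where
  "exp_trig \<alpha> \<beta> c d p = exp (\<alpha> \<bullet> p) * (c * cos (\<beta> \<bullet> p) + d * sin (\<beta> \<bullet> p))"

lemma partial_exp_trig:
  "partial i (exp_trig \<alpha> \<beta> c d) =
     exp_trig \<alpha> \<beta> (coord \<alpha> i * c + coord \<beta> i * d) (coord \<alpha> i * d - coord \<beta> i * c)"
proof
  fix q :: "real \<times> real"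
  obtain x y where q: "q = (x, y)" by fastforce
  have "((\<lambda>t. exp_trig \<alpha> \<beta> c d (t, y)) has_real_derivative
          exp_trig \<alpha> \<beta> (fst \<alpha> * c + fst \<beta> * d) (fst \<alpha> * d - fst \<beta> * c) (x, y)) (at x)"
       "((\<lambda>t. exp_trig \<alpha> \<beta> c d (x, t)) has_real_derivative
          exp_trig \<alpha> \<beta> (snd \<alpha> * c + snd \<beta> * d) (snd \<alpha> * d - snd \<beta> * c) (x, y)) (at y)"
    unfolding exp_trig_def inner_real_pair
    by (auto intro!: derivative_eq_intros simp: algebra_simps)
  then show "partial i (exp_trig \<alpha> \<beta> c d) q =
      exp_trig \<alpha> \<beta> (coord \<alpha> i * c + coord \<beta> i * d) (coord \<alpha> i * d - coord \<beta> i * c) q"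
    by (simp add: partial_def q coord_def DERIV_imp_deriv)
qed

lemma hess_exp_trig:
  "hess G (exp_trig \<alpha> \<beta> c d) i j p = exp_trig \<alpha> \<beta>
     (coord \<alpha> i * (coord \<alpha> j * c + coord \<beta> j * d) + coord \<beta> i * (coord \<alpha> j * d - coord \<beta> j * c)
       - (\<Sum>k\<in>coord_idx. G i j k p * (coord \<alpha> k * c + coord \<beta> k * d)))
     (coord \<alpha> i * (coord \<alpha> j * d - coord \<beta> j * c) - coord \<beta> i * (coord \<alpha> j * c + coord \<beta> j * d)
       - (\<Sum>k\<in>coord_idx. G i j k p * (coord \<alpha> k * d - coord \<beta> k * c))) p"
  unfolding hess_def partial_exp_trig
  by (simp add: exp_trig_def sum_coord_idx algebra_simps)

lemma exp_trig_QE_zero: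
  assumes "exp_trig \<alpha> \<beta> c d \<in> QE U G" and "p \<in> U" and "i \<in> coord_idx" and "j \<in> coord_idx"
  defines "\<rho> \<equiv> ricci_s G i j p"
  shows "(coord \<alpha> i * (coord \<alpha> j * c + coord \<beta> j * d) + coord \<beta> i * (coord \<alpha> j * d - coord \<beta> j * c)
       - (\<Sum>k\<in>coord_idx. G i j k p * (coord \<alpha> k * c + coord \<beta> k * d)) + \<rho> * c) * cos (\<beta> \<bullet> p)
     + (coord \<alpha> i * (coord \<alpha> j * d - coord \<beta> j * c) - coord \<beta> i * (coord \<alpha> j * c + coord \<beta> j * d)
       - (\<Sum>k\<in>coord_idx. G i j k p * (coord \<alpha> k * d - coord \<beta> k * c)) + \<rho> * d) * sin (\<beta> \<bullet> p) = 0" (is "?L = 0")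
proof -
  have "exp (\<alpha> \<bullet> p) * ?L = hess G (exp_trig \<alpha> \<beta> c d) i j p + exp_trig \<alpha> \<beta> c d p * \<rho>"
    unfolding hess_exp_trig by (simp add: exp_trig_def algebra_simps)
  also have "\<dots> = 0"
    using assms unfolding QE_def by auto
  finally show ?thesis by simp
qed

lemma cos_sin_rotation_eq_zero:
  fixes A B x :: real
  assumes "A * cos x + B * sin x = 0" and "A * sin x - B * cos x = 0"
  shows "A = 0" and "B = 0"
  using assms sin_cos_squared_add[of x] by algebra+

lemma QE_exp_cos_sin:
  assumes "exp_trig \<alpha> \<beta> 1 0 \<in> QE U G" and "exp_trig \<alpha> \<beta> 0 1 \<in> QE U G"
    and "p \<in> U" and "i \<in> coord_idx" and "j \<in> coord_idx"
  shows "(\<Sum>k\<in>coord_idx. G i j k p * coord \<beta> k) = coord \<alpha> i * coord \<beta> j + coord \<alpha> j * coord \<beta> i"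
    and "(\<Sum>k\<in>coord_idx. G i j k p * coord \<alpha> k)
           = coord \<alpha> i * coord \<alpha> j - coord \<beta> i * coord \<beta> j + ricci_s G i j p"
proof -
  let ?A = "coord \<alpha> i * coord \<alpha> j - coord \<beta> i * coord \<beta> j - (\<Sum>k\<in>coord_idx. G i j k p * coord \<alpha> k) + ricci_s G i j p"
  let ?B = "(\<Sum>k\<in>coord_idx. G i j k p * coord \<beta> k) - coord \<alpha> i * coord \<beta> j - coord \<alpha> j * coord \<beta> i"
  have "?A * cos (\<beta> \<bullet> p) + ?B * sin (\<beta> \<bullet> p) = 0" "?A * sin (\<beta> \<bullet> p) - ?B * cos (\<beta> \<bullet> p) = 0"
    using exp_trig_QE_zero[OF assms(1,3-5)] exp_trig_QE_zero[OF assms(2,3-5)]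
    by (simp_all add: sum_negf algebra_simps)
  then have "?A = 0" "?B = 0" by (rule cos_sin_rotation_eq_zero)+
  then show "(\<Sum>k\<in>coord_idx. G i j k p * coord \<beta> k) = coord \<alpha> i * coord \<beta> j + coord \<alpha> j * coord \<beta> i"
    and "(\<Sum>k\<in>coord_idx. G i j k p * coord \<alpha> k)
           = coord \<alpha> i * coord \<alpha> j - coord \<beta> i * coord \<beta> j + ricci_s G i j p"
    by simp_all
qed

lemma QE_exp:
  assumes "exp_trig \<mu> 0 1 0 \<in> QE U G" and "p \<in> U" and "i \<in> coord_idx" and "j \<in> coord_idx"
  shows "(\<Sum>k\<in>coord_idx. G i j k p * coord \<mu> k) = coord \<mu> i * coord \<mu> j + ricci_s G i j p"
  using exp_trig_QE_zero[OF assms] by simp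

text \<open>The equations left after eliminating the Ricci term: the first is the sine part of the
  equation for \<open>exp (\<alpha> \<bullet> x) * cos (\<beta> \<bullet> x)\<close>, the second is the equation for \<open>exp (\<mu> \<bullet> x)\<close>
  minus the cosine part of that one.\<close>

definition christoffel_eqs ::
    "(nat \<Rightarrow> nat \<Rightarrow> nat \<Rightarrow> real) \<Rightarrow> real \<times> real \<Rightarrow> real \<times> real \<Rightarrow> real \<times> real \<Rightarrow> bool" where
  "christoffel_eqs C \<alpha> \<beta> \<mu> \<longleftrightarrow> (\<forall>i\<in>coord_idx. \<forall>j\<in>coord_idx.
     (\<Sum>k\<in>coord_idx. C i j k * coord \<beta> k) = coord \<alpha> i * coord \<beta> j + coord \<alpha> j * coord \<beta> i \<and>
     (\<Sum>k\<in>coord_idx. C i j k * coord (\<mu> - \<alpha>) k)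
       = coord \<mu> i * coord \<mu> j - coord \<alpha> i * coord \<alpha> j + coord \<beta> i * coord \<beta> j)"

lemma christoffel_eqs_of_QE:
  assumes "exp_trig \<alpha> \<beta> 1 0 \<in> QE U G" and "exp_trig \<alpha> \<beta> 0 1 \<in> QE U G"
    and "exp_trig \<mu> 0 1 0 \<in> QE U G" and "p \<in> U"
  shows "christoffel_eqs (\<lambda>i j k. G i j k p) \<alpha> \<beta> \<mu>"
  unfolding christoffel_eqs_def
proof (intro ballI conjI)
  fix i j assume ij: "i \<in> coord_idx" "j \<in> coord_idx"
  show "(\<Sum>k\<in>coord_idx. G i j k p * coord \<beta> k) = coord \<alpha> i * coord \<beta> j + coord \<alpha> j * coord \<beta> i"
    using QE_exp_cos_sin(1)[OF assms(1,2,4) ij] .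
  have "(\<Sum>k\<in>coord_idx. G i j k p * coord (\<mu> - \<alpha>) k)
      = (\<Sum>k\<in>coord_idx. G i j k p * coord \<mu> k) - (\<Sum>k\<in>coord_idx. G i j k p * coord \<alpha> k)"
    by (simp add: right_diff_distrib sum_subtractf)
  then show "(\<Sum>k\<in>coord_idx. G i j k p * coord (\<mu> - \<alpha>) k)
      = coord \<mu> i * coord \<mu> j - coord \<alpha> i * coord \<alpha> j + coord \<beta> i * coord \<beta> j"
    using QE_exp[OF assms(3,4) ij] QE_exp_cos_sin(2)[OF assms(1,2,4) ij] by simp
qed

definition det2 :: "real \<times> real \<Rightarrow> real \<times> real \<Rightarrow> real" where
  "det2 u v = fst u * snd v - snd u * fst v"

lemma det2_unique:
  assumes "det2 u v \<noteq> 0"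
    and "(\<Sum>k\<in>coord_idx. x k * coord u k) = (\<Sum>k\<in>coord_idx. y k * coord u k)"
    and "(\<Sum>k\<in>coord_idx. x k * coord v k) = (\<Sum>k\<in>coord_idx. y k * coord v k)"
    and "k \<in> coord_idx"
  shows "x k = y k"
proof -
  have "x 1 * fst u + x 2 * snd u = y 1 * fst u + y 2 * snd u"
    and "x 1 * fst v + x 2 * snd v = y 1 * fst v + y 2 * snd v"
    using assms(2,3) by (simp_all add: sum_coord_idx)
  then have "(x 1 - y 1) * det2 u v = 0" and "(x 2 - y 2) * det2 u v = 0"
    unfolding det2_def by algebra+
  then show ?thesis
    using assms(1,4) by (auto simp: coord_idx_def)
qed

lemma christoffel_eqs_det2_nonzero:
  assumes eqs: "christoffel_eqs C \<alpha> \<beta> \<mu>" and "\<beta> \<noteq> 0"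
  shows "det2 \<beta> (\<mu> - \<alpha>) \<noteq> 0"
proof
  assume det: "det2 \<beta> (\<mu> - \<alpha>) = 0"
  obtain i where i: "i \<in> coord_idx" and \<beta>i: "coord \<beta> i \<noteq> 0"
  proof -
    have "coord \<beta> 1 \<noteq> 0 \<or> coord \<beta> 2 \<noteq> 0"
      using \<open>\<beta> \<noteq> 0\<close> by (simp add: prod_eq_iff)
    then show ?thesis
      using that[of 1] that[of 2] by (auto simp: coord_idx_def)
  qed
  have e1: "(\<Sum>k\<in>coord_idx. C i i k * coord \<beta> k) = 2 * coord \<alpha> i * coord \<beta> i"
    and e2: "(\<Sum>k\<in>coord_idx. C i i k * coord (\<mu> - \<alpha>) k)
       = (coord \<mu> i)\<^sup>2 - (coord \<alpha> i)\<^sup>2 + (coord \<beta> i)\<^sup>2"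
    using eqs i unfolding christoffel_eqs_def by (auto simp: power2_eq_square)
  \<comment> \<open>Eliminating C i i k between e1 and e2 leaves a multiple of det2, which vanishes.\<close>
  have "coord \<beta> i * ((coord \<mu> i - coord \<alpha> i)\<^sup>2 + (coord \<beta> i)\<^sup>2) = 0"
  proof (cases "i = 1")
    case True
    show ?thesis
      using e1 e2 det unfolding True sum_coord_idx det2_def coord_1 coord_2 coord_diff fst_diff snd_diff
      by algebra
  next
    case False
    with i have "i = 2"
      by (simp add: coord_idx_def)
    show ?thesis
      using e1 e2 det unfolding \<open>i = 2\<close> sum_coord_idx det2_def coord_1 coord_2 coord_diff fst_diff snd_diff
      by algebra
  qed
  moreover have "(coord \<mu> i - coord \<alpha> i)\<^sup>2 + (coord \<beta> i)\<^sup>2 > 0"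
    using \<beta>i by (simp add: add_nonneg_pos)
  ultimately show False
    using \<beta>i by simp
qed

lemma christoffel_eqs_unique:
  assumes "det2 \<beta> (\<mu> - \<alpha>) \<noteq> 0"
    and "christoffel_eqs C \<alpha> \<beta> \<mu>" and "christoffel_eqs C' \<alpha> \<beta> \<mu>"
    and "i \<in> coord_idx" and "j \<in> coord_idx" and "k \<in> coord_idx"
  shows "C i j k = C' i j k"
  using det2_unique[OF assms(1), of "C i j" "C' i j" k] assms(2-)
  unfolding christoffel_eqs_def by auto

definition pullback :: "(nat \<Rightarrow> nat \<Rightarrow> real) \<Rightarrow> real \<times> real \<Rightarrow> real \<times> real" where
  "pullback T v = (\<Sum>i\<in>coord_idx. T i 1 * coord v i, \<Sum>i\<in>coord_idx. T i 2 * coord v i)"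

lemma coord_pullback:
  "a \<in> coord_idx \<Longrightarrow> coord (pullback T v) a = (\<Sum>i\<in>coord_idx. T i a * coord v i)"
  by (auto simp: pullback_def coord_idx_def)

lemma pullback_diff: "pullback T (u - v) = pullback T u - pullback T v"
  by (simp add: pullback_def sum_coord_idx algebra_simps)

text \<open>Both sides of the identity defining \<open>lin_equiv\<close> have the same contractions with
  \<open>\<beta>\<close> and \<open>\<mu> - \<alpha>\<close>, which determine a covector since \<open>det2 \<beta> (\<mu> - \<alpha>) \<noteq> 0\<close>.\<close>

lemma lin_equiv_pullback:
  assumes C: "christoffel_eqs C (pullback T \<alpha>) (pullback T \<beta>) (pullback T \<mu>)"
    and C': "christoffel_eqs C' \<alpha> \<beta> \<mu>"
    and det: "det2 \<beta> (\<mu> - \<alpha>) \<noteq> 0" and T: "T 1 1 * T 2 2 - T 1 2 * T 2 1 \<noteq> 0"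
  shows "lin_equiv C C'"
  unfolding lin_equiv_def
proof (intro exI[of _ T] conjI T ballI)
  fix a b k assume a: "a \<in> coord_idx" and b: "b \<in> coord_idx" and k: "k \<in> coord_idx"
  define x where "x k = (\<Sum>c\<in>coord_idx. T k c * C a b c)" for k
  define y where "y k = (\<Sum>i\<in>coord_idx. \<Sum>j\<in>coord_idx. T i a * T j b * C' i j k)" for k
  have x_contract: "(\<Sum>k\<in>coord_idx. x k * coord w k) = (\<Sum>c\<in>coord_idx. C a b c * coord (pullback T w) c)" for w
    by (simp add: x_def coord_pullback sum_coord_idx algebra_simps)
  have y_contract: "(\<Sum>k\<in>coord_idx. y k * coord w k)
      = (\<Sum>i\<in>coord_idx. \<Sum>j\<in>coord_idx. T i a * T j b * (\<Sum>k\<in>coord_idx. C' i j k * coord w k))" for w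
    by (simp add: y_def sum_coord_idx algebra_simps)
  have "(\<Sum>k\<in>coord_idx. x k * coord \<beta> k) = (\<Sum>k\<in>coord_idx. y k * coord \<beta> k)"
  proof -
    have "(\<Sum>k\<in>coord_idx. y k * coord \<beta> k) = (\<Sum>i\<in>coord_idx. \<Sum>j\<in>coord_idx.
        T i a * T j b * (coord \<alpha> i * coord \<beta> j + coord \<alpha> j * coord \<beta> i))"
      unfolding y_contract using C' by (auto simp: christoffel_eqs_def intro!: sum.cong)
    also have "\<dots> = coord (pullback T \<alpha>) a * coord (pullback T \<beta>) b + coord (pullback T \<alpha>) b * coord (pullback T \<beta>) a"
      using a b by (simp add: coord_pullback sum_coord_idx algebra_simps)
    also have "\<dots> = (\<Sum>k\<in>coord_idx. x k * coord \<beta> k)"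
      unfolding x_contract using C a b by (simp add: christoffel_eqs_def)
    finally show ?thesis ..
  qed
  moreover have "(\<Sum>k\<in>coord_idx. x k * coord (\<mu> - \<alpha>) k) = (\<Sum>k\<in>coord_idx. y k * coord (\<mu> - \<alpha>) k)"
  proof -
    have "(\<Sum>k\<in>coord_idx. y k * coord (\<mu> - \<alpha>) k) = (\<Sum>i\<in>coord_idx. \<Sum>j\<in>coord_idx.
        T i a * T j b * (coord \<mu> i * coord \<mu> j - coord \<alpha> i * coord \<alpha> j + coord \<beta> i * coord \<beta> j))"
      unfolding y_contract using C' by (auto simp: christoffel_eqs_def intro!: sum.cong)
    also have "\<dots> = coord (pullback T \<mu>) a * coord (pullback T \<mu>) b
        - coord (pullback T \<alpha>) a * coord (pullback T \<alpha>) b + coord (pullback T \<beta>) a * coord (pullback T \<beta>) b"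
      using a b by (simp add: coord_pullback sum_coord_idx algebra_simps)
    also have "\<dots> = (\<Sum>k\<in>coord_idx. x k * coord (\<mu> - \<alpha>) k)"
      unfolding x_contract pullback_diff using C a b by (simp add: christoffel_eqs_def)
    finally show ?thesis ..
  qed
  ultimately show "x k = y k"
    using det2_unique[OF det] k by blast
qed

lemma lin_equiv_frame:
  assumes "christoffel_eqs C \<alpha> \<beta> \<mu>" and "christoffel_eqs C' \<alpha>' \<beta>' \<mu>'"
    and "det2 \<beta>' (\<mu>' - \<alpha>') \<noteq> 0" and "det2 u v \<noteq> 0"
    and "\<alpha> = fst \<alpha>' *\<^sub>R u + snd \<alpha>' *\<^sub>R v" and "\<beta> = fst \<beta>' *\<^sub>R u + snd \<beta>' *\<^sub>R v"
    and "\<mu> = fst \<mu>' *\<^sub>R u + snd \<mu>' *\<^sub>R v"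
  shows "lin_equiv C C'"
proof -
  define T where "T k = coord (if k = 1 then u else v)" for k :: nat
  have "pullback T w = fst w *\<^sub>R u + snd w *\<^sub>R v" for w
    by (simp add: T_def pullback_def sum_coord_idx prod_eq_iff)
  moreover have "T 1 1 * T 2 2 - T 1 2 * T 2 1 = det2 u v"
    by (simp add: T_def det2_def)
  ultimately show ?thesis
    using lin_equiv_pullback[of C T \<alpha>' \<beta>' \<mu>' C'] assms by simp
qed

lemma christoffel_eqs_Gamma_c2:
  "s \<noteq> 1 \<Longrightarrow> christoffel_eqs (Gamma_c2 s t) (1, 0) (0, 1) (s, t)"
  by (auto simp: christoffel_eqs_def Gamma_c2_def Gam_def coord_idx_def field_simps power2_eq_square)

lemma christoffel_eqs_Gamma_5_1: "christoffel_eqs (Gamma_5_1 c) (0, c) (0, 1) (1, 0)"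
  by (auto simp: christoffel_eqs_def Gamma_5_1_def Gam_def coord_idx_def algebra_simps power2_eq_square)

lemma Gamma_c2_0_0: "Gamma_c2 0 0 = Gamma_5_0"
  by (simp add: Gamma_c2_def Gamma_5_0_def)

lemma det2_eq_0_imp_parallel:
  assumes "det2 \<alpha> \<beta> = 0" and "\<beta> \<noteq> 0"
  obtains c where "\<alpha> = c *\<^sub>R \<beta>"
proof (cases "fst \<beta> = 0")
  case True
  with assms have "snd \<beta> \<noteq> 0" and "fst \<alpha> = 0"
    by (auto simp: det2_def prod_eq_iff)
  then show ?thesis
    using that[of "snd \<alpha> / snd \<beta>"] True by (simp add: prod_eq_iff)
next
  case False
  with assms(1) show ?thesis
    using that[of "fst \<alpha> / fst \<beta>"] by (simp add: det2_def prod_eq_iff field_simps)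
qed

lemma christoffel_eqs_independent_case:
  assumes eqs: "christoffel_eqs C \<alpha> \<beta> \<mu>" and det: "det2 \<beta> (\<mu> - \<alpha>) \<noteq> 0"
    and indep: "det2 \<alpha> \<beta> \<noteq> 0"
  shows "(\<exists>s t. s \<noteq> 1 \<and> (s, t) \<noteq> (0, 0) \<and> lin_equiv C (Gamma_c2 s t)) \<or> lin_equiv C Gamma_5_0"
proof -
  define s where "s = det2 \<mu> \<beta> / det2 \<alpha> \<beta>"
  define t where "t = det2 \<alpha> \<mu> / det2 \<alpha> \<beta>"
  have "fst \<mu> = (det2 \<mu> \<beta> * fst \<alpha> + det2 \<alpha> \<mu> * fst \<beta>) / det2 \<alpha> \<beta>"
    and "snd \<mu> = (det2 \<mu> \<beta> * snd \<alpha> + det2 \<alpha> \<mu> * snd \<beta>) / det2 \<alpha> \<beta>"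
    using indep by (simp_all add: eq_divide_eq) (simp_all add: det2_def algebra_simps)
  then have \<mu>: "\<mu> = s *\<^sub>R \<alpha> + t *\<^sub>R \<beta>"
    by (simp add: s_def t_def prod_eq_iff add_divide_distrib)
  have "det2 \<beta> (\<mu> - \<alpha>) = (1 - s) * det2 \<alpha> \<beta>"
    unfolding \<mu> by (simp add: det2_def algebra_simps)
  then have "s \<noteq> 1"
    using det by auto
  have "lin_equiv C (Gamma_c2 s t)"
    using \<open>s \<noteq> 1\<close>
    by (intro lin_equiv_frame[OF eqs christoffel_eqs_Gamma_c2 _ indep]) (simp_all add: \<mu> det2_def)
  then show ?thesis
    using \<open>s \<noteq> 1\<close> by (cases "(s, t) = (0, 0)") (auto simp: Gamma_c2_0_0)
qed

lemma christoffel_eqs_parallel_case: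
  assumes eqs: "christoffel_eqs C \<alpha> \<beta> \<mu>" and det: "det2 \<beta> (\<mu> - \<alpha>) \<noteq> 0"
    and dep: "det2 \<alpha> \<beta> = 0"
  shows "\<exists>c. lin_equiv C (Gamma_5_1 c)"
proof -
  have "\<beta> \<noteq> 0"
    using det by (auto simp: det2_def)
  then obtain c where \<alpha>: "\<alpha> = c *\<^sub>R \<beta>"
    using dep det2_eq_0_imp_parallel by blast
  have "det2 \<mu> \<beta> \<noteq> 0"
    using det unfolding \<alpha> by (simp add: det2_def algebra_simps)
  then have "lin_equiv C (Gamma_5_1 c)"
    by (intro lin_equiv_frame[OF eqs christoffel_eqs_Gamma_5_1])
      (simp_all add: \<alpha> det2_def)
  then show ?thesis ..
qed

lemma christoffel_eqs_classification:
  assumes "christoffel_eqs C \<alpha> \<beta> \<mu>" and "det2 \<beta> (\<mu> - \<alpha>) \<noteq> 0"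
  shows "(\<exists>s t. s \<noteq> 1 \<and> (s, t) \<noteq> (0, 0) \<and> lin_equiv C (Gamma_c2 s t)) \<or>
      (\<exists>c. lin_equiv C (Gamma_5_1 c)) \<or> lin_equiv C Gamma_5_0"
  using christoffel_eqs_independent_case[OF assms] christoffel_eqs_parallel_case[OF assms] by blast

lemma QE_basis_exp_trig:
  assumes "is_basis3_on U (QE U G) (exp_trig \<alpha> \<beta> 1 0) (exp_trig \<alpha> \<beta> 0 1) (exp_trig \<mu> 0 1 0)"
  shows "U \<noteq> {}" and "\<beta> \<noteq> 0"
    and "\<And>p. p \<in> U \<Longrightarrow> christoffel_eqs (\<lambda>i j k. G i j k p) \<alpha> \<beta> \<mu>"
proof -
  have indep: "\<And>a b c. \<forall>p\<in>U. a * exp_trig \<alpha> \<beta> 1 0 p + b * exp_trig \<alpha> \<beta> 0 1 p + c * exp_trig \<mu> 0 1 0 p = 0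
      \<Longrightarrow> a = 0 \<and> b = 0 \<and> c = 0"
    using assms unfolding is_basis3_on_def by blast
  show "U \<noteq> {}"
    using indep[of 1 0 0] by auto
  show "\<beta> \<noteq> 0"
  proof
    assume "\<beta> = 0"
    then show False
      using indep[of 0 1 0] by (simp add: exp_trig_def)
  qed
  show "christoffel_eqs (\<lambda>i j k. G i j k p) \<alpha> \<beta> \<mu>" if "p \<in> U" for p
    using assms that unfolding is_basis3_on_def by (blast intro: christoffel_eqs_of_QE)
qed

theorem theorem2p7:
  fixes U :: "(real \<times> real) set"
    and G :: "nat \<Rightarrow> nat \<Rightarrow> nat \<Rightarrow> real \<times> real \<Rightarrow> real"
    and L1 L2 L3 :: "real \<times> real \<Rightarrow> real"
  assumes "open U" and "connected U"
    and "affine_surface U G"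
    and "real_linear_fun L1" and "real_linear_fun L2" and "real_linear_fun L3"
    and "is_basis3_on U (QE U G) (\<lambda>p. exp (L1 p) * cos (L2 p)) (\<lambda>p. exp (L1 p) * sin (L2 p))
           (\<lambda>p. exp (L3 p))"
  shows "\<exists>C :: nat \<Rightarrow> nat \<Rightarrow> nat \<Rightarrow> real.
           (\<forall>i\<in>coord_idx. \<forall>j\<in>coord_idx. \<forall>k\<in>coord_idx. \<forall>p\<in>U. G i j k p = C i j k) \<and>
           ((\<exists>b1 b2. b1 \<noteq> 1 \<and> (b1, b2) \<noteq> (0, 0) \<and> lin_equiv C (Gamma_c2 b1 b2)) \<or>
            (\<exists>c. lin_equiv C (Gamma_5_1 c)) \<or>
            lin_equiv C Gamma_5_0)"
proof -
  obtain \<alpha> where L1: "L1 = (\<lambda>p. \<alpha> \<bullet> p)" using assms(4) by (rule real_linear_fun_inner)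
  obtain \<beta> where L2: "L2 = (\<lambda>p. \<beta> \<bullet> p)" using assms(5) by (rule real_linear_fun_inner)
  obtain \<mu> where L3: "L3 = (\<lambda>p. \<mu> \<bullet> p)" using assms(6) by (rule real_linear_fun_inner)
  have "(\<lambda>p. exp (L1 p) * cos (L2 p)) = exp_trig \<alpha> \<beta> 1 0"
    and "(\<lambda>p. exp (L1 p) * sin (L2 p)) = exp_trig \<alpha> \<beta> 0 1"
    and "(\<lambda>p. exp (L3 p)) = exp_trig \<mu> 0 1 0"
    by (simp_all add: fun_eq_iff L1 L2 L3 exp_trig_def)
  then have basis: "is_basis3_on U (QE U G) (exp_trig \<alpha> \<beta> 1 0) (exp_trig \<alpha> \<beta> 0 1) (exp_trig \<mu> 0 1 0)"
    using assms(7) by simp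
  note eqs = QE_basis_exp_trig(3)[OF basis]
  obtain p0 where p0: "p0 \<in> U"
    using QE_basis_exp_trig(1)[OF basis] by blast
  define C where "C i j k = G i j k p0" for i j k
  have C: "christoffel_eqs C \<alpha> \<beta> \<mu>"
    unfolding C_def using eqs[OF p0] .
  have det: "det2 \<beta> (\<mu> - \<alpha>) \<noteq> 0"
    using christoffel_eqs_det2_nonzero[OF C QE_basis_exp_trig(2)[OF basis]] .
  have "\<forall>i\<in>coord_idx. \<forall>j\<in>coord_idx. \<forall>k\<in>coord_idx. \<forall>p\<in>U. G i j k p = C i j k"
    using christoffel_eqs_unique[OF det eqs C] by blast
  with christoffel_eqs_classification[OF C det] show ?thesis
    by blast
qed

end
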